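(* Suppose that (i) there is a net $\{\varphi_\alpha\}$ in $MA(G,\sigma)$ converging pointwise to $1$ with $\|M_{\varphi_\alpha}\|=1$ for all $\alpha$, and (ii) for each $\alpha$ there is a function $\kappa_\alpha:G\to[1,\infty)$ such that $G$ is $\kappa_\alpha$-decaying and $\varphi_\alpha\kappa_\alpha\in c_0(G)$. Then $(G,\sigma)$ has the metric Fejér property.
   Context: $G$ is a discrete group, $\sigma:G\times G\to\mathbb{T}$ a normalized 2-cocycle ($\sigma(g,h)\sigma(gh,k)=\sigma(h,k)\sigma(g,hk)$, $\sigma(g,e)=\sigma(e,g)=1$); $\Lambda_\sigma(g)$ is the unitary on $\ell^2(G)$ with $(\Lambda_\sigma(g)\xi)(h)=\sigma(g,g^{-1}h)\xi(g^{-1}h)$, $\lambda=\Lambda_1$; $C^*_r(G,\sigma)$ is the operator-norm closure of $\mathrm{span}\,\Lambda_\sigma(G)$. For $\varphi:G\to\mathbb{C}$, $M_\varphi$ is the linear map with $M_\varphi(\Lambda_\sigma(g))=\varphi(g)\Lambda_\sigma(g)$; $\varphi\in MA(G,\sigma)$ if $M_\varphi$ is bounded, then extended to $C^*_r(G,\sigma)$. $\mathcal{K}(G)$ = finitely supported functions, $\pi_\lambda(f)=\sum_g f(g)\lambda(g)$; for $\kappa:G\to[1,\infty)$, $\|\xi\|_{2,\kappa}=\|\xi\kappa\|_2$ and $G$ is $\kappa$-decaying if $f\mapsto\pi_\lambda(f)$ is bounded from $(\mathcal{K}(G),\|\cdot\|_{2,\kappa})$ to $C^*_r(G,1)$. $c_0(G)$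 is the space of functions vanishing at infinity. $(G,\sigma)$ has the metric Fejér property if there is a net $\{\varphi_\beta\}$ in $\mathcal{K}(G)$ converging pointwise to $1$ with $\|M_{\varphi_\beta}\|=1$ for all $\beta$ (such a net then satisfies $M_{\varphi_\beta}(x)\to x$ in norm for all $x\in C^*_r(G,\sigma)$). *)

theory Defs
  imports "HOL-Analysis.Analysis"
begin

text \<open>The discrete group G is a type of class group_add (not necessarily commutative),
  written additively: gh is g + h, the identity is 0, the inverse of g is - g.\<close>

definition normalized_2cocycle :: "('g::group_add \<Rightarrow> 'g \<Rightarrow> complex) \<Rightarrow> bool" where
  "normalized_2cocycle \<sigma> \<longleftrightarrow>
     (\<forall>g h. cmod (\<sigma> g h) = 1) \<and>
     (\<forall>g h k. \<sigma> g h * \<sigma> (g + h) k = \<sigma> h k * \<sigma> g (h + k)) \<and>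
     (\<forall>g. \<sigma> g 0 = 1 \<and> \<sigma> 0 g = 1)"

definition Kfun :: "('g \<Rightarrow> complex) set" where
  "Kfun = {f. finite {g. f g \<noteq> 0}}"

definition l2 :: "('g \<Rightarrow> complex) set" where
  "l2 = {\<xi>. (\<lambda>h. (cmod (\<xi> h))\<^sup>2) summable_on UNIV}"

definition l2norm :: "('g \<Rightarrow> complex) \<Rightarrow> real" where
  "l2norm \<xi> = sqrt (infsum (\<lambda>h. (cmod (\<xi> h))\<^sup>2) UNIV)"

definition opnorm :: "(('g \<Rightarrow> complex) \<Rightarrow> ('g \<Rightarrow> complex)) \<Rightarrow> real" where
  "opnorm T = Sup {l2norm (T \<xi>) | \<xi>. \<xi> \<in> l2 \<and> l2norm \<xi> \<le> 1}"

definition Lam :: "('g::group_add \<Rightarrow> 'g \<Rightarrow> complex) \<Rightarrow> 'g \<Rightarrow> ('g \<Rightarrow> complex) \<Rightarrow> ('g \<Rightarrow> complex)" where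
  "Lam \<sigma> g \<xi> = (\<lambda>h. \<sigma> g (- g + h) * \<xi> (- g + h))"

definition opsum :: "('g::group_add \<Rightarrow> 'g \<Rightarrow> complex) \<Rightarrow> ('g \<Rightarrow> complex) \<Rightarrow> ('g \<Rightarrow> complex) \<Rightarrow> ('g \<Rightarrow> complex)" where
  "opsum \<sigma> a \<xi> = (\<lambda>h. \<Sum>g\<in>{g. a g \<noteq> 0}. a g * Lam \<sigma> g \<xi> h)"

definition pi_lambda :: "('g::group_add \<Rightarrow> complex) \<Rightarrow> ('g \<Rightarrow> complex) \<Rightarrow> ('g \<Rightarrow> complex)" where
  "pi_lambda f = opsum (\<lambda>_ _. 1) f"

text \<open>M_phi maps sum a(g) Lambda(g) to sum phi(g) a(g) Lambda(g). phi is in MA(G,sigma) iff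
  this map is bounded on span Lambda_sigma(G) (hence extends to C*_r(G,sigma)); its norm is the
  norm on the dense subspace span Lambda_sigma(G).\<close>
definition MA :: "('g::group_add \<Rightarrow> 'g \<Rightarrow> complex) \<Rightarrow> ('g \<Rightarrow> complex) set" where
  "MA \<sigma> = {\<phi>. \<exists>C. \<forall>a\<in>Kfun. opnorm (opsum \<sigma> (\<lambda>g. \<phi> g * a g)) \<le> C * opnorm (opsum \<sigma> a)}"

definition mult_norm :: "('g::group_add \<Rightarrow> 'g \<Rightarrow> complex) \<Rightarrow> ('g \<Rightarrow> complex) \<Rightarrow> real" where
  "mult_norm \<sigma> \<phi> = Sup {opnorm (opsum \<sigma> (\<lambda>g. \<phi> g * a g)) | a. a \<in> Kfun \<and> opnorm (opsum \<sigma> a) \<le> 1}"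

definition kappa_decaying :: "('g::group_add \<Rightarrow> real) \<Rightarrow> bool" where
  "kappa_decaying \<kappa> \<longleftrightarrow>
     (\<exists>C. \<forall>f\<in>Kfun. opnorm (pi_lambda f) \<le> C * l2norm (\<lambda>g. f g * complex_of_real (\<kappa> g)))"

definition c0 :: "('g \<Rightarrow> complex) set" where
  "c0 = {f. (f \<longlongrightarrow> 0) cofinite}"

text \<open>Metric Fejer property: a net in K(G) converging pointwise to 1 with norm-one multipliers.
  A net is represented by a proper filter on the function space (identity net).\<close>
definition metric_fejer :: "('g::group_add \<Rightarrow> 'g \<Rightarrow> complex) \<Rightarrow> bool" where
  "metric_fejer \<sigma> \<longleftrightarrow>
     (\<exists>F :: ('g \<Rightarrow> complex) filter. F \<noteq> bot \<and>
        (\<forall>\<^sub>F \<phi> in F. \<phi> \<in> Kfun \<and> \<phi> \<in> MA \<sigma> \<and> mult_norm \<sigma> \<phi> = 1) \<and>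
        (\<forall>g. ((\<lambda>\<phi>. \<phi> g) \<longlongrightarrow> 1) F))"

end

theory Submission
  imports Defs
begin

text \<open>Fix a finite set S of group elements and a tolerance. Pick \<phi> = \<phi>_\<alpha> close to 1
  on S and cut it off outside the finite set where |\<phi> \<kappa>_\<alpha>| is not small. By \<kappa>_\<alpha>-decay,
  the multiplier with the small tail of \<phi> as symbol has tiny norm on the reduced twisted
  group algebra, so the truncation \<psi> is a finitely supported multiplier whose norm is close
  to 1; dividing by that norm gives a finitely supported norm-one multiplier close to 1 on S.
  The sets of such multipliers, indexed by (S, tolerance), form a filter base, which is the
  required net.\<close>

abbreviation reduced_norm :: "('g::group_add \<Rightarrow> 'g \<Rightarrow> complex) \<Rightarrow> ('g \<Rightarrow> complex) \<Rightarrow> real" where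
  "reduced_norm \<sigma> a \<equiv> opnorm (opsum \<sigma> a)"

lemma l2_if_L2_set_bounded:
  fixes \<xi> :: "'g \<Rightarrow> complex"
  assumes "\<And>F. finite F \<Longrightarrow> L2_set (\<lambda>h. cmod (\<xi> h)) F \<le> M"
  shows "\<xi> \<in> l2 \<and> l2norm \<xi> \<le> M"
proof -
  have M: "0 \<le> M" using assms[of "{}"] by simp
  have sums: "(\<Sum>h\<in>F. (cmod (\<xi> h))\<^sup>2) \<le> M\<^sup>2" if "finite F" for F
    using assms[OF that] unfolding L2_set_def by (rule sqrt_le_D)
  have summable: "(\<lambda>h. (cmod (\<xi> h))\<^sup>2) summable_on UNIV"
    by (rule nonneg_bdd_above_summable_on) (auto simp: bdd_above_def intro: sums)
  have "infsum (\<lambda>h. (cmod (\<xi> h))\<^sup>2) UNIV \<le> M\<^sup>2"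
    by (rule infsum_le_finite_sums[OF summable]) (auto intro: sums)
  then show ?thesis
    using summable M by (simp add: l2_def l2norm_def real_le_lsqrt)
qed

lemma L2_set_le_l2norm:
  fixes \<xi> :: "'g \<Rightarrow> complex"
  assumes "\<xi> \<in> l2" "finite F"
  shows "L2_set (\<lambda>h. cmod (\<xi> h)) F \<le> l2norm \<xi>"
proof -
  have "(\<Sum>h\<in>F. (cmod (\<xi> h))\<^sup>2) \<le> infsum (\<lambda>h. (cmod (\<xi> h))\<^sup>2) UNIV"
    by (rule finite_sum_le_infsum) (use assms in \<open>auto simp: l2_def\<close>)
  then show ?thesis unfolding L2_set_def l2norm_def by simp
qed

lemma l2norm_nonneg: "0 \<le> l2norm \<xi>"
  unfolding l2norm_def by (simp add: infsum_nonneg)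

lemma l2norm_zero [simp]: "l2norm (\<lambda>h. 0) = 0"
  by (simp add: l2norm_def)

lemma zero_in_l2 [simp]: "(\<lambda>h. 0) \<in> l2"
  by (simp add: l2_def)

lemma l2_dominated:
  fixes \<xi> \<eta> :: "'g \<Rightarrow> complex"
  assumes "\<xi> \<in> l2" "\<And>h. cmod (\<eta> h) \<le> c * cmod (\<xi> h)" "0 \<le> c"
  shows "\<eta> \<in> l2 \<and> l2norm \<eta> \<le> c * l2norm \<xi>"
proof (rule l2_if_L2_set_bounded)
  fix F :: "'g set" assume F: "finite F"
  have "L2_set (\<lambda>h. cmod (\<eta> h)) F \<le> L2_set (\<lambda>h. c * cmod (\<xi> h)) F"
    by (rule L2_set_mono) (use assms in auto)
  also have "\<dots> = c * L2_set (\<lambda>h. cmod (\<xi> h)) F"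
    using assms(3) by (simp add: L2_set_right_distrib)
  also have "\<dots> \<le> c * l2norm \<xi>"
    using L2_set_le_l2norm[OF assms(1) F] assms(3) by (simp add: mult_left_mono)
  finally show "L2_set (\<lambda>h. cmod (\<eta> h)) F \<le> c * l2norm \<xi>" .
qed

lemma l2_add:
  fixes \<xi> \<eta> :: "'g \<Rightarrow> complex"
  assumes "\<xi> \<in> l2" "\<eta> \<in> l2"
  shows "(\<lambda>h. \<xi> h + \<eta> h) \<in> l2 \<and> l2norm (\<lambda>h. \<xi> h + \<eta> h) \<le> l2norm \<xi> + l2norm \<eta>"
proof (rule l2_if_L2_set_bounded)
  fix F :: "'g set" assume F: "finite F"
  have "L2_set (\<lambda>h. cmod (\<xi> h + \<eta> h)) F \<le> L2_set (\<lambda>h. cmod (\<xi> h) + cmod (\<eta> h)) F"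
    by (rule L2_set_mono) (auto simp: norm_triangle_ineq)
  also have "\<dots> \<le> L2_set (\<lambda>h. cmod (\<xi> h)) F + L2_set (\<lambda>h. cmod (\<eta> h)) F"
    by (rule L2_set_triangle_ineq)
  also have "\<dots> \<le> l2norm \<xi> + l2norm \<eta>"
    using L2_set_le_l2norm[OF assms(1) F] L2_set_le_l2norm[OF assms(2) F] by simp
  finally show "L2_set (\<lambda>h. cmod (\<xi> h + \<eta> h)) F \<le> l2norm \<xi> + l2norm \<eta>" .
qed

lemma l2norm_cmult:
  fixes \<xi> :: "'g \<Rightarrow> complex"
  assumes "\<xi> \<in> l2"
  shows "l2norm (\<lambda>h. c * \<xi> h) = cmod c * l2norm \<xi>"
proof -
  have "infsum (\<lambda>h. (cmod (c * \<xi> h))\<^sup>2) UNIV = (cmod c)\<^sup>2 * infsum (\<lambda>h. (cmod (\<xi> h))\<^sup>2) UNIV"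
    using assms by (simp add: l2_def norm_mult power_mult_distrib infsum_cmult_right)
  then show ?thesis unfolding l2norm_def by (simp add: real_sqrt_mult)
qed

lemma normalized_2cocycle_norm_le_1: "normalized_2cocycle \<sigma> \<Longrightarrow> cmod (\<sigma> g h) \<le> 1"
  unfolding normalized_2cocycle_def by simp

lemma normalized_2cocycle_trivial: "normalized_2cocycle (\<lambda>_ _. 1)"
  unfolding normalized_2cocycle_def by simp

lemma zero_in_Kfun [simp]: "(\<lambda>g. 0) \<in> Kfun"
  by (simp add: Kfun_def)

lemma Kfun_mult:
  assumes "a \<in> Kfun"
  shows "(\<lambda>g. \<psi> g * a g) \<in> Kfun"
proof -
  have "{g. \<psi> g * a g \<noteq> 0} \<subseteq> {g. a g \<noteq> 0}" by auto
  then show ?thesis using assms finite_subset unfolding Kfun_def by blast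
qed

lemma Lam_l2:
  fixes \<sigma> :: "'g::group_add \<Rightarrow> 'g \<Rightarrow> complex"
  assumes "normalized_2cocycle \<sigma>" "\<xi> \<in> l2"
  shows "Lam \<sigma> g \<xi> \<in> l2 \<and> l2norm (Lam \<sigma> g \<xi>) \<le> l2norm \<xi>"
proof (rule l2_if_L2_set_bounded)
  fix F :: "'g set" assume F: "finite F"
  have "L2_set (\<lambda>h. cmod (Lam \<sigma> g \<xi> h)) F \<le> L2_set (\<lambda>h. cmod (\<xi> (- g + h))) F"
    by (rule L2_set_mono)
       (auto simp: Lam_def norm_mult intro!: mult_left_le_one_le normalized_2cocycle_norm_le_1[OF assms(1)])
  also have "\<dots> = L2_set (\<lambda>h. cmod (\<xi> h)) ((\<lambda>h. - g + h) ` F)"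
    unfolding L2_set_def by (subst sum.reindex) (auto simp: inj_on_def)
  also have "\<dots> \<le> l2norm \<xi>"
    using F by (intro L2_set_le_l2norm[OF assms(2)]) auto
  finally show "L2_set (\<lambda>h. cmod (Lam \<sigma> g \<xi> h)) F \<le> l2norm \<xi>" .
qed

lemma sum_Lam_l2:
  fixes \<sigma> :: "'g::group_add \<Rightarrow> 'g \<Rightarrow> complex"
  assumes "normalized_2cocycle \<sigma>" "\<xi> \<in> l2" "finite S"
  shows "(\<lambda>h. \<Sum>g\<in>S. a g * Lam \<sigma> g \<xi> h) \<in> l2 \<and>
         l2norm (\<lambda>h. \<Sum>g\<in>S. a g * Lam \<sigma> g \<xi> h) \<le> (\<Sum>g\<in>S. cmod (a g)) * l2norm \<xi>"
  using assms(3)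
proof (induction S rule: finite_induct)
  case empty
  then show ?case by simp
next
  case (insert x S)
  have Lam: "Lam \<sigma> x \<xi> \<in> l2 \<and> l2norm (Lam \<sigma> x \<xi>) \<le> l2norm \<xi>"
    by (rule Lam_l2[OF assms(1,2)])
  have summand: "(\<lambda>h. a x * Lam \<sigma> x \<xi> h) \<in> l2 \<and> l2norm (\<lambda>h. a x * Lam \<sigma> x \<xi> h) \<le> cmod (a x) * l2norm \<xi>"
  proof -
    have "(\<lambda>h. a x * Lam \<sigma> x \<xi> h) \<in> l2 \<and>
        l2norm (\<lambda>h. a x * Lam \<sigma> x \<xi> h) \<le> cmod (a x) * l2norm (Lam \<sigma> x \<xi>)"
      by (rule l2_dominated) (use Lam in \<open>auto simp: norm_mult\<close>)
    then show ?thesis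
      using Lam by (meson norm_ge_zero mult_left_mono order_trans)
  qed
  show ?case
    using l2_add[OF conjunct1[OF summand] conjunct1[OF insert.IH]] summand insert.IH insert.hyps
    by (simp add: distrib_right)
qed

lemma opsum_l2:
  fixes \<sigma> :: "'g::group_add \<Rightarrow> 'g \<Rightarrow> complex"
  assumes "normalized_2cocycle \<sigma>" "a \<in> Kfun" "\<xi> \<in> l2"
  shows "opsum \<sigma> a \<xi> \<in> l2 \<and> l2norm (opsum \<sigma> a \<xi>) \<le> (\<Sum>g\<in>{g. a g \<noteq> 0}. cmod (a g)) * l2norm \<xi>"
  unfolding opsum_def by (rule sum_Lam_l2) (use assms in \<open>auto simp: Kfun_def\<close>)

lemma opnorm_le:
  assumes "\<And>\<xi>. \<xi> \<in> l2 \<Longrightarrow> l2norm \<xi> \<le> 1 \<Longrightarrow> l2norm (T \<xi>) \<le> M"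
  shows "opnorm T \<le> M"
  unfolding opnorm_def
proof (rule cSup_least)
  show "{l2norm (T \<xi>) |\<xi>. \<xi> \<in> l2 \<and> l2norm \<xi> \<le> 1} \<noteq> {}"
    using zero_in_l2 l2norm_zero by fastforce
qed (use assms in blast)

lemma l2norm_le_opnorm:
  assumes "\<And>\<xi>. \<xi> \<in> l2 \<Longrightarrow> l2norm \<xi> \<le> 1 \<Longrightarrow> l2norm (T \<xi>) \<le> M"
    and "\<xi> \<in> l2" "l2norm \<xi> \<le> 1"
  shows "l2norm (T \<xi>) \<le> opnorm T"
  unfolding opnorm_def by (rule cSup_upper) (use assms in \<open>auto simp: bdd_above_def\<close>)

lemma l2norm_opsum_le_reduced_norm:
  fixes \<sigma> :: "'g::group_add \<Rightarrow> 'g \<Rightarrow> complex"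
  assumes "normalized_2cocycle \<sigma>" "a \<in> Kfun" "\<xi> \<in> l2" "l2norm \<xi> \<le> 1"
  shows "l2norm (opsum \<sigma> a \<xi>) \<le> reduced_norm \<sigma> a"
proof (rule l2norm_le_opnorm[OF _ assms(3,4)])
  fix \<zeta> :: "'g \<Rightarrow> complex" assume "\<zeta> \<in> l2" "l2norm \<zeta> \<le> 1"
  then show "l2norm (opsum \<sigma> a \<zeta>) \<le> (\<Sum>g\<in>{g. a g \<noteq> 0}. cmod (a g))"
    using opsum_l2[OF assms(1,2)] by (meson mult_left_le sum_nonneg norm_ge_zero order_trans)
qed

lemma reduced_norm_nonneg:
  fixes \<sigma> :: "'g::group_add \<Rightarrow> 'g \<Rightarrow> complex"
  assumes "normalized_2cocycle \<sigma>" "a \<in> Kfun"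
  shows "0 \<le> reduced_norm \<sigma> a"
  using l2norm_opsum_le_reduced_norm[OF assms zero_in_l2] l2norm_nonneg by (fastforce intro: order_trans)

lemma reduced_norm_zero [simp]: "reduced_norm \<sigma> (\<lambda>g. 0) = 0"
proof -
  have "reduced_norm \<sigma> (\<lambda>g. 0) \<le> 0"
    by (rule opnorm_le) (simp add: opsum_def)
  moreover have "l2norm (opsum \<sigma> (\<lambda>g. 0) (\<lambda>h. 0)) \<le> reduced_norm \<sigma> (\<lambda>g. 0)"
    by (rule l2norm_le_opnorm[where M = 0]) (simp_all add: opsum_def)
  ultimately show ?thesis by (simp add: opsum_def)
qed

lemma opsum_delta:
  fixes \<sigma> :: "'g::group_add \<Rightarrow> 'g \<Rightarrow> complex"
  assumes "normalized_2cocycle \<sigma>" "a \<in> Kfun"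
  shows "opsum \<sigma> a (\<lambda>h. if h = 0 then 1 else 0) = a"
proof
  fix h
  have "opsum \<sigma> a (\<lambda>h. if h = 0 then 1 else 0) h = (\<Sum>g\<in>{g. a g \<noteq> 0}. if g = h then a g else 0)"
    unfolding opsum_def Lam_def
    by (rule sum.cong) (use assms(1) in \<open>auto simp: normalized_2cocycle_def add_eq_0_iff2\<close>)
  also have "\<dots> = a h"
    using assms(2) by (simp add: sum.delta' Kfun_def)
  finally show "opsum \<sigma> a (\<lambda>h. if h = 0 then 1 else 0) h = a h" .
qed

lemma l2norm_le_reduced_norm:
  fixes \<sigma> :: "'g::group_add \<Rightarrow> 'g \<Rightarrow> complex"
  assumes "normalized_2cocycle \<sigma>" "a \<in> Kfun"
  shows "a \<in> l2 \<and> l2norm a \<le> reduced_norm \<sigma> a"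
proof -
  have delta: "(\<lambda>h::'g. if h = 0 then 1 else 0 :: complex) \<in> l2 \<and>
      l2norm (\<lambda>h::'g. if h = 0 then 1 else 0 :: complex) \<le> 1"
  proof (rule l2_if_L2_set_bounded)
    fix F :: "'g set" assume "finite F"
    have "(\<Sum>h\<in>F. (cmod (if h = 0 then 1 else 0 :: complex))\<^sup>2) = (\<Sum>h\<in>F. if h = 0 then 1 else 0)"
      by (rule sum.cong) auto
    with \<open>finite F\<close> show "L2_set (\<lambda>h. cmod (if h = 0 then 1 else 0 :: complex)) F \<le> 1"
      by (simp add: L2_set_def sum.delta)
  qed
  then show ?thesis
    using opsum_l2[OF assms] l2norm_opsum_le_reduced_norm[OF assms] opsum_delta[OF assms] by metis
qed

lemma reduced_norm_le_pi_lambda_norm: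
  fixes \<sigma> :: "'g::group_add \<Rightarrow> 'g \<Rightarrow> complex"
  assumes \<sigma>: "normalized_2cocycle \<sigma>" and b: "b \<in> Kfun"
  shows "reduced_norm \<sigma> b \<le> opnorm (pi_lambda (\<lambda>g. complex_of_real (cmod (b g))))"
proof (rule opnorm_le)
  fix \<xi> :: "'g \<Rightarrow> complex" assume \<xi>: "\<xi> \<in> l2" "l2norm \<xi> \<le> 1"
  define b' where "b' = (\<lambda>g. complex_of_real (cmod (b g)))"
  define \<xi>' where "\<xi>' = (\<lambda>g. complex_of_real (cmod (\<xi> g)))"
  have b': "b' \<in> Kfun" using b by (simp add: b'_def Kfun_def)
  have \<xi>': "\<xi>' \<in> l2 \<and> l2norm \<xi>' \<le> 1 * l2norm \<xi>"
    by (rule l2_dominated) (use \<xi> in \<open>auto simp: \<xi>'_def\<close>)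
  have pointwise: "cmod (opsum \<sigma> b \<xi> h) \<le> 1 * cmod (pi_lambda b' \<xi>' h)" for h
  proof -
    have "cmod (opsum \<sigma> b \<xi> h) \<le> (\<Sum>g\<in>{g. b g \<noteq> 0}. cmod (b g * Lam \<sigma> g \<xi> h))"
      unfolding opsum_def by (rule norm_sum)
    also have "\<dots> \<le> (\<Sum>g\<in>{g. b g \<noteq> 0}. cmod (b g) * cmod (\<xi> (- g + h)))"
      by (rule sum_mono) (auto simp: Lam_def norm_mult
          intro!: mult_left_mono mult_left_le_one_le normalized_2cocycle_norm_le_1[OF \<sigma>])
    also have "\<dots> = cmod (pi_lambda b' \<xi>' h)"
      unfolding pi_lambda_def opsum_def Lam_def b'_def \<xi>'_def
      by (simp flip: of_real_mult of_real_sum add: sum_nonneg)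
    finally show ?thesis by simp
  qed
  have "pi_lambda b' \<xi>' \<in> l2"
    using opsum_l2[OF normalized_2cocycle_trivial b'] \<xi>' by (simp add: pi_lambda_def)
  then have "l2norm (opsum \<sigma> b \<xi>) \<le> 1 * l2norm (pi_lambda b' \<xi>')"
    using l2_dominated[of "pi_lambda b' \<xi>'" "opsum \<sigma> b \<xi>" 1] pointwise by simp
  also have "\<dots> \<le> opnorm (pi_lambda b')"
    using l2norm_opsum_le_reduced_norm[OF normalized_2cocycle_trivial b'] \<xi>' \<xi>
    unfolding pi_lambda_def by simp
  finally show "l2norm (opsum \<sigma> b \<xi>) \<le> opnorm (pi_lambda (\<lambda>g. complex_of_real (cmod (b g))))"
    by (simp add: b'_def)
qed

lemma opsum_add:
  assumes "a \<in> Kfun" "b \<in> Kfun"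
  shows "opsum \<sigma> (\<lambda>g. a g + b g) \<xi> = (\<lambda>h. opsum \<sigma> a \<xi> h + opsum \<sigma> b \<xi> h)"
proof
  fix h
  define S where "S = {g. a g \<noteq> 0} \<union> {g. b g \<noteq> 0}"
  have S: "finite S" using assms unfolding S_def Kfun_def by blast
  have extend: "opsum \<sigma> c \<xi> h = (\<Sum>g\<in>S. c g * Lam \<sigma> g \<xi> h)" if "{g. c g \<noteq> 0} \<subseteq> S" for c
    unfolding opsum_def by (rule sum.mono_neutral_left) (use S that in auto)
  show "opsum \<sigma> (\<lambda>g. a g + b g) \<xi> h = opsum \<sigma> a \<xi> h + opsum \<sigma> b \<xi> h"
    by (subst (1 2 3) extend) (auto simp: S_def distrib_right sum.distrib)
qed

lemma reduced_norm_add: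
  fixes \<sigma> :: "'g::group_add \<Rightarrow> 'g \<Rightarrow> complex"
  assumes \<sigma>: "normalized_2cocycle \<sigma>" and "a \<in> Kfun" "b \<in> Kfun"
  shows "reduced_norm \<sigma> (\<lambda>g. a g + b g) \<le> reduced_norm \<sigma> a + reduced_norm \<sigma> b"
proof (rule opnorm_le)
  fix \<xi> :: "'g \<Rightarrow> complex" assume \<xi>: "\<xi> \<in> l2" "l2norm \<xi> \<le> 1"
  have "l2norm (opsum \<sigma> (\<lambda>g. a g + b g) \<xi>) \<le> l2norm (opsum \<sigma> a \<xi>) + l2norm (opsum \<sigma> b \<xi>)"
    unfolding opsum_add[OF assms(2,3)]
    using l2_add opsum_l2[OF \<sigma> assms(2) \<xi>(1)] opsum_l2[OF \<sigma> assms(3) \<xi>(1)] by blast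
  also have "\<dots> \<le> reduced_norm \<sigma> a + reduced_norm \<sigma> b"
    using l2norm_opsum_le_reduced_norm[OF \<sigma> _ \<xi>] assms(2,3) by (simp add: add_mono)
  finally show "l2norm (opsum \<sigma> (\<lambda>g. a g + b g) \<xi>) \<le> reduced_norm \<sigma> a + reduced_norm \<sigma> b" .
qed

lemma reduced_norm_scaleR:
  fixes \<sigma> :: "'g::group_add \<Rightarrow> 'g \<Rightarrow> complex"
  assumes \<sigma>: "normalized_2cocycle \<sigma>" and b: "b \<in> Kfun" and r: "0 < r"
  shows "reduced_norm \<sigma> (\<lambda>g. complex_of_real r * b g) = r * reduced_norm \<sigma> b"
proof -
  have rb: "(\<lambda>g. complex_of_real r * b g) \<in> Kfun" by (rule Kfun_mult[OF b])
  have l2norm_scaled: "l2norm (opsum \<sigma> (\<lambda>g. complex_of_real r * b g) \<xi>) = r * l2norm (opsum \<sigma> b \<xi>)"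
    if "\<xi> \<in> l2" for \<xi>
  proof -
    have "opsum \<sigma> (\<lambda>g. complex_of_real r * b g) \<xi> = (\<lambda>h. complex_of_real r * opsum \<sigma> b \<xi> h)"
      using r unfolding opsum_def by (simp add: sum_distrib_left mult.assoc)
    then show ?thesis
      using r opsum_l2[OF \<sigma> b that] by (simp add: l2norm_cmult)
  qed
  have "reduced_norm \<sigma> (\<lambda>g. complex_of_real r * b g) \<le> r * reduced_norm \<sigma> b"
    using l2norm_opsum_le_reduced_norm[OF \<sigma> b] r by (intro opnorm_le) (simp add: l2norm_scaled)
  moreover have "reduced_norm \<sigma> b \<le> reduced_norm \<sigma> (\<lambda>g. complex_of_real r * b g) / r"
    using l2norm_opsum_le_reduced_norm[OF \<sigma> rb] r
    by (intro opnorm_le) (simp add: l2norm_scaled field_simps)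
  ultimately show ?thesis using r by (simp add: field_simps)
qed

text \<open>With x_a = \<Sum> a(g) \<Lambda>_\<sigma>(g):
  \<parallel>x_{\<psi>a}\<parallel> \<le> \<parallel>\<pi>_\<lambda>(|\<psi>a|)\<parallel> \<le> C \<parallel>\<psi>a\<kappa>\<parallel>_2 \<le> C \<eta> \<parallel>a\<parallel>_2 \<le> C \<eta> \<parallel>x_a\<parallel>.\<close>

lemma kappa_decaying_multiplier_bound:
  fixes \<sigma> :: "'g::group_add \<Rightarrow> 'g \<Rightarrow> complex" and \<kappa> :: "'g \<Rightarrow> real"
  assumes \<sigma>: "normalized_2cocycle \<sigma>" and \<kappa>: "kappa_decaying \<kappa>"
  obtains C where "0 \<le> C"
    and "\<And>\<psi> a \<eta>. a \<in> Kfun \<Longrightarrow> (\<And>g. cmod (\<psi> g * complex_of_real (\<kappa> g)) \<le> \<eta>) \<Longrightarrow>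
           reduced_norm \<sigma> (\<lambda>g. \<psi> g * a g) \<le> C * \<eta> * reduced_norm \<sigma> a"
proof -
  obtain C0 where C0: "\<forall>f\<in>Kfun. opnorm (pi_lambda f) \<le> C0 * l2norm (\<lambda>g. f g * complex_of_real (\<kappa> g))"
    using \<kappa> unfolding kappa_decaying_def by blast
  define C where "C = max C0 0"
  have bound: "reduced_norm \<sigma> (\<lambda>g. \<psi> g * a g) \<le> C * \<eta> * reduced_norm \<sigma> a"
    if a: "a \<in> Kfun" and small: "\<And>g. cmod (\<psi> g * complex_of_real (\<kappa> g)) \<le> \<eta>" for \<psi> a \<eta>
  proof -
    define b where "b = (\<lambda>g. complex_of_real (cmod (\<psi> g * a g)))"
    have b: "b \<in> Kfun"
      using Kfun_mult[OF a, of \<psi>] by (simp add: b_def Kfun_def)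
    have \<eta>: "0 \<le> \<eta>"
      using small by (meson norm_ge_zero order_trans)
    have a_l2: "a \<in> l2 \<and> l2norm a \<le> reduced_norm \<sigma> a"
      by (rule l2norm_le_reduced_norm[OF \<sigma> a])
    have weighted: "l2norm (\<lambda>g. b g * complex_of_real (\<kappa> g)) \<le> \<eta> * l2norm a"
    proof -
      have pointwise: "cmod (b g * complex_of_real (\<kappa> g)) \<le> \<eta> * cmod (a g)" for g
        using mult_right_mono[OF small[of g] norm_ge_zero[of "a g"]]
        by (simp add: b_def norm_mult mult.commute mult.left_commute)
      show ?thesis
        using l2_dominated[of a "\<lambda>g. b g * complex_of_real (\<kappa> g)" \<eta>] pointwise a_l2 \<eta> by blast
    qed
    have "reduced_norm \<sigma> (\<lambda>g. \<psi> g * a g) \<le> opnorm (pi_lambda b)"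
      unfolding b_def by (rule reduced_norm_le_pi_lambda_norm[OF \<sigma> Kfun_mult[OF a]])
    also have "\<dots> \<le> C * l2norm (\<lambda>g. b g * complex_of_real (\<kappa> g))"
      using C0 b l2norm_nonneg by (fastforce simp: C_def intro: order_trans mult_right_mono)
    also have "\<dots> \<le> C * (\<eta> * reduced_norm \<sigma> a)"
    proof (rule mult_left_mono)
      show "l2norm (\<lambda>g. b g * complex_of_real (\<kappa> g)) \<le> \<eta> * reduced_norm \<sigma> a"
        using weighted a_l2 \<eta> by (meson mult_left_mono order_trans)
    qed (simp add: C_def)
    finally show ?thesis by (simp add: mult.assoc)
  qed
  show thesis
    using bound by (intro that[of C]) (auto simp: C_def)
qed

lemma reduced_norm_mult_le_mult_norm:
  fixes \<sigma> :: "'g::group_add \<Rightarrow> 'g \<Rightarrow> complex"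
  assumes \<sigma>: "normalized_2cocycle \<sigma>" and \<phi>: "\<phi> \<in> MA \<sigma>"
    and a: "a \<in> Kfun" "reduced_norm \<sigma> a \<le> 1"
  shows "reduced_norm \<sigma> (\<lambda>g. \<phi> g * a g) \<le> mult_norm \<sigma> \<phi>"
proof -
  obtain D where D: "\<forall>a\<in>Kfun. reduced_norm \<sigma> (\<lambda>g. \<phi> g * a g) \<le> D * reduced_norm \<sigma> a"
    using \<phi> unfolding MA_def by blast
  have "bdd_above {reduced_norm \<sigma> (\<lambda>g. \<phi> g * a g) | a. a \<in> Kfun \<and> reduced_norm \<sigma> a \<le> 1}"
  proof (rule bdd_aboveI)
    fix x assume "x \<in> {reduced_norm \<sigma> (\<lambda>g. \<phi> g * a g) | a. a \<in> Kfun \<and> reduced_norm \<sigma> a \<le> 1}"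
    then obtain a where "a \<in> Kfun" "reduced_norm \<sigma> a \<le> 1" "x = reduced_norm \<sigma> (\<lambda>g. \<phi> g * a g)"
      by blast
    moreover from this have "D * reduced_norm \<sigma> a \<le> \<bar>D\<bar>"
      using reduced_norm_nonneg[OF \<sigma>]
      by (metis abs_ge_self abs_mult abs_of_nonneg mult_left_le order_trans abs_ge_zero)
    ultimately show "x \<le> \<bar>D\<bar>" using D by fastforce
  qed
  then show ?thesis
    unfolding mult_norm_def using a by (auto intro: cSup_upper)
qed

lemma mult_norm_le:
  assumes "\<And>a. a \<in> Kfun \<Longrightarrow> reduced_norm \<sigma> a \<le> 1 \<Longrightarrow> reduced_norm \<sigma> (\<lambda>g. \<phi> g * a g) \<le> M"
  shows "mult_norm \<sigma> \<phi> \<le> M"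
  unfolding mult_norm_def
proof (rule cSup_least)
  show "{reduced_norm \<sigma> (\<lambda>g. \<phi> g * a g) | a. a \<in> Kfun \<and> reduced_norm \<sigma> a \<le> 1} \<noteq> {}"
    using zero_in_Kfun reduced_norm_zero by fastforce
qed (use assms in blast)

lemma MA_mult_norm_perturb:
  fixes \<sigma> :: "'g::group_add \<Rightarrow> 'g \<Rightarrow> complex"
  assumes \<sigma>: "normalized_2cocycle \<sigma>" and \<psi>: "\<psi> \<in> MA \<sigma>" and \<delta>: "0 \<le> \<delta>"
    and close: "\<And>a. a \<in> Kfun \<Longrightarrow>
      reduced_norm \<sigma> (\<lambda>g. \<phi> g * a g) \<le> reduced_norm \<sigma> (\<lambda>g. \<psi> g * a g) + \<delta> * reduced_norm \<sigma> a"
  shows "\<phi> \<in> MA \<sigma> \<and> mult_norm \<sigma> \<phi> \<le> mult_norm \<sigma> \<psi> + \<delta>"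
proof
  obtain D where D: "\<forall>a\<in>Kfun. reduced_norm \<sigma> (\<lambda>g. \<psi> g * a g) \<le> D * reduced_norm \<sigma> a"
    using \<psi> unfolding MA_def by blast
  have "\<forall>a\<in>Kfun. reduced_norm \<sigma> (\<lambda>g. \<phi> g * a g) \<le> (D + \<delta>) * reduced_norm \<sigma> a"
    using D close by (fastforce simp: distrib_right)
  then show "\<phi> \<in> MA \<sigma>" unfolding MA_def by blast
next
  show "mult_norm \<sigma> \<phi> \<le> mult_norm \<sigma> \<psi> + \<delta>"
  proof (rule mult_norm_le)
    fix a assume a: "a \<in> Kfun" "reduced_norm \<sigma> a \<le> 1"
    have "\<delta> * reduced_norm \<sigma> a \<le> \<delta>"
      using a \<delta> reduced_norm_nonneg[OF \<sigma> a(1)] by (simp add: mult_left_le)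
    then show "reduced_norm \<sigma> (\<lambda>g. \<phi> g * a g) \<le> mult_norm \<sigma> \<psi> + \<delta>"
      using close[OF a(1)] reduced_norm_mult_le_mult_norm[OF \<sigma> \<psi> a] by linarith
  qed
qed

lemma MA_mult_norm_scaleR:
  fixes \<sigma> :: "'g::group_add \<Rightarrow> 'g \<Rightarrow> complex"
  assumes \<sigma>: "normalized_2cocycle \<sigma>" and \<psi>: "\<psi> \<in> MA \<sigma>" and r: "0 < r"
  shows "(\<lambda>g. complex_of_real r * \<psi> g) \<in> MA \<sigma> \<and>
    mult_norm \<sigma> (\<lambda>g. complex_of_real r * \<psi> g) = r * mult_norm \<sigma> \<psi>"
proof -
  let ?r\<psi> = "\<lambda>g. complex_of_real r * \<psi> g"
  have scaled: "reduced_norm \<sigma> (\<lambda>g. ?r\<psi> g * a g) = r * reduced_norm \<sigma> (\<lambda>g. \<psi> g * a g)"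
    if "a \<in> Kfun" for a
    using reduced_norm_scaleR[OF \<sigma> Kfun_mult[OF that] r] by (simp add: mult.assoc)
  obtain D where D: "\<forall>a\<in>Kfun. reduced_norm \<sigma> (\<lambda>g. \<psi> g * a g) \<le> D * reduced_norm \<sigma> a"
    using \<psi> unfolding MA_def by blast
  have "\<forall>a\<in>Kfun. reduced_norm \<sigma> (\<lambda>g. ?r\<psi> g * a g) \<le> (r * D) * reduced_norm \<sigma> a"
    using D r by (simp add: scaled)
  then have r\<psi>: "?r\<psi> \<in> MA \<sigma>" unfolding MA_def by blast
  have "mult_norm \<sigma> ?r\<psi> \<le> r * mult_norm \<sigma> \<psi>"
    using reduced_norm_mult_le_mult_norm[OF \<sigma> \<psi>] r by (intro mult_norm_le) (simp add: scaled)
  moreover have "mult_norm \<sigma> \<psi> \<le> mult_norm \<sigma> ?r\<psi> / r"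
  proof (rule mult_norm_le)
    fix a assume a: "a \<in> Kfun" "reduced_norm \<sigma> a \<le> 1"
    have "r * reduced_norm \<sigma> (\<lambda>g. \<psi> g * a g) \<le> mult_norm \<sigma> ?r\<psi>"
      using reduced_norm_mult_le_mult_norm[OF \<sigma> r\<psi> a] unfolding scaled[OF a(1)] .
    then show "reduced_norm \<sigma> (\<lambda>g. \<psi> g * a g) \<le> mult_norm \<sigma> ?r\<psi> / r"
      using r by (simp add: field_simps)
  qed
  ultimately show ?thesis using r\<psi> r by (simp add: field_simps)
qed

lemma reduced_norm_mult_le_add_diff:
  fixes \<sigma> :: "'g::group_add \<Rightarrow> 'g \<Rightarrow> complex"
  assumes \<sigma>: "normalized_2cocycle \<sigma>" and a: "a \<in> Kfun"
  shows "reduced_norm \<sigma> (\<lambda>g. \<phi> g * a g)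
    \<le> reduced_norm \<sigma> (\<lambda>g. \<psi> g * a g) + reduced_norm \<sigma> (\<lambda>g. (\<phi> g - \<psi> g) * a g)"
proof -
  have "(\<lambda>g. \<phi> g * a g) = (\<lambda>g. \<psi> g * a g + (\<phi> g - \<psi> g) * a g)"
    by (simp add: algebra_simps)
  then show ?thesis
    using reduced_norm_add[OF \<sigma> Kfun_mult[OF a] Kfun_mult[OF a]] by simp
qed

lemma finite_truncation_multiplier:
  fixes \<sigma> :: "'g::group_add \<Rightarrow> 'g \<Rightarrow> complex" and \<kappa> :: "'g \<Rightarrow> real"
  assumes \<sigma>: "normalized_2cocycle \<sigma>" and \<phi>: "\<phi> \<in> MA \<sigma>"
    and \<kappa>: "kappa_decaying \<kappa>" "(\<lambda>g. \<phi> g * complex_of_real (\<kappa> g)) \<in> c0"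
    and S: "finite S" and \<theta>: "0 < \<theta>"
  obtains \<psi> where "\<psi> \<in> Kfun" "\<psi> \<in> MA \<sigma>" "\<bar>mult_norm \<sigma> \<psi> - mult_norm \<sigma> \<phi>\<bar> \<le> \<theta>"
    "\<forall>g\<in>S. \<psi> g = \<phi> g"
proof -
  obtain C where C: "0 \<le> C"
    and decay: "\<And>\<psi> a \<eta>. a \<in> Kfun \<Longrightarrow> (\<And>g. cmod (\<psi> g * complex_of_real (\<kappa> g)) \<le> \<eta>) \<Longrightarrow>
         reduced_norm \<sigma> (\<lambda>g. \<psi> g * a g) \<le> C * \<eta> * reduced_norm \<sigma> a"
    using kappa_decaying_multiplier_bound[OF \<sigma> \<kappa>(1)] by blast
  define \<eta> where "\<eta> = \<theta> / (C + 1)"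
  have \<eta>: "0 < \<eta>" "C * \<eta> \<le> \<theta>"
    using C \<theta> by (auto simp: \<eta>_def field_simps)
  define U where "U = S \<union> {g. \<eta> \<le> cmod (\<phi> g * complex_of_real (\<kappa> g))}"
  have "\<forall>\<^sub>F g in cofinite. cmod (\<phi> g * complex_of_real (\<kappa> g)) < \<eta>"
    using \<kappa>(2) \<eta>(1) by (simp add: c0_def tendsto_iff)
  then have U: "finite U"
    using S by (simp add: U_def eventually_cofinite not_less)
  define \<psi> where "\<psi> = (\<lambda>g. if g \<in> U then \<phi> g else 0)"
  have "\<psi> \<in> Kfun"
    using U by (auto simp: Kfun_def \<psi>_def elim: finite_subset[rotated])
  have tail: "cmod ((\<phi> g - \<psi> g) * complex_of_real (\<kappa> g)) \<le> \<eta>"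
    "cmod ((\<psi> g - \<phi> g) * complex_of_real (\<kappa> g)) \<le> \<eta>" for g
    using \<eta>(1) by (auto simp: \<psi>_def U_def)
  have close: "reduced_norm \<sigma> (\<lambda>g. \<phi>1 g * a g) \<le> reduced_norm \<sigma> (\<lambda>g. \<phi>2 g * a g) + \<theta> * reduced_norm \<sigma> a"
    if a: "a \<in> Kfun" and diff: "\<And>g. cmod ((\<phi>1 g - \<phi>2 g) * complex_of_real (\<kappa> g)) \<le> \<eta>" for \<phi>1 \<phi>2 a
    using reduced_norm_mult_le_add_diff[OF \<sigma> a, of \<phi>1 \<phi>2] decay[OF a diff]
      mult_right_mono[OF \<eta>(2) reduced_norm_nonneg[OF \<sigma> a]] by simp
  have \<psi>: "\<psi> \<in> MA \<sigma>" "mult_norm \<sigma> \<psi> \<le> mult_norm \<sigma> \<phi> + \<theta>"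
    using MA_mult_norm_perturb[OF \<sigma> \<phi>, of \<theta> \<psi>] close tail \<theta> by auto
  moreover have "mult_norm \<sigma> \<phi> \<le> mult_norm \<sigma> \<psi> + \<theta>"
    using MA_mult_norm_perturb[OF \<sigma> \<psi>(1), of \<theta> \<phi>] close tail \<theta> by auto
  ultimately show thesis
    using that[of \<psi>] \<open>\<psi> \<in> Kfun\<close> by (auto simp: \<psi>_def U_def)
qed

lemma finitely_supported_norm_one_multiplier_near:
  fixes \<sigma> :: "'g::group_add \<Rightarrow> 'g \<Rightarrow> complex" and \<kappa> :: "'g \<Rightarrow> real"
  assumes \<sigma>: "normalized_2cocycle \<sigma>"
    and \<phi>: "\<phi> \<in> MA \<sigma>" "mult_norm \<sigma> \<phi> = 1"
    and \<kappa>: "kappa_decaying \<kappa>" "(\<lambda>g. \<phi> g * complex_of_real (\<kappa> g)) \<in> c0"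
    and S: "finite S" and \<theta>: "0 < \<theta>" "\<theta> \<le> 1/2"
    and near: "\<forall>g\<in>S. cmod (\<phi> g - 1) < \<theta>"
  shows "\<exists>\<psi>\<in>Kfun. \<psi> \<in> MA \<sigma> \<and> mult_norm \<sigma> \<psi> = 1 \<and> (\<forall>g\<in>S. cmod (\<psi> g - 1) < 4 * \<theta>)"
proof -
  obtain \<psi>0 where \<psi>0: "\<psi>0 \<in> Kfun" "\<psi>0 \<in> MA \<sigma>" "\<bar>mult_norm \<sigma> \<psi>0 - 1\<bar> \<le> \<theta>"
    "\<forall>g\<in>S. \<psi>0 g = \<phi> g"
    using finite_truncation_multiplier[OF \<sigma> \<phi>(1) \<kappa> S \<theta>(1)] \<phi>(2) by metis
  define m where "m = mult_norm \<sigma> \<psi>0"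
  have m: "\<bar>1 - m\<bar> \<le> \<theta>" "1/2 \<le> m"
    using \<psi>0(3) \<theta> by (auto simp: m_def)
  define \<psi> where "\<psi> = (\<lambda>g. complex_of_real (1 / m) * \<psi>0 g)"
  have "\<psi> \<in> MA \<sigma> \<and> mult_norm \<sigma> \<psi> = 1"
    using MA_mult_norm_scaleR[OF \<sigma> \<psi>0(2), of "1 / m"] m(2) by (simp add: \<psi>_def m_def)
  moreover have "\<psi> \<in> Kfun"
    unfolding \<psi>_def by (rule Kfun_mult[OF \<psi>0(1)])
  moreover have "cmod (\<psi> g - 1) < 4 * \<theta>" if "g \<in> S" for g
  proof -
    have "\<psi> g - 1 = (\<phi> g - 1 + (1 - complex_of_real m)) / complex_of_real m"
      using that \<psi>0(4) m(2) by (simp add: \<psi>_def field_simps)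
    moreover have "cmod (1 - complex_of_real m) = \<bar>1 - m\<bar>"
      by (metis norm_of_real of_real_1 of_real_diff)
    ultimately have "cmod (\<psi> g - 1) \<le> (cmod (\<phi> g - 1) + \<bar>1 - m\<bar>) / m"
      using m(2) norm_triangle_ineq[of "\<phi> g - 1" "1 - complex_of_real m"]
      by (simp add: norm_divide divide_right_mono)
    also have "\<dots> < 2 * \<theta> / m"
      using near that m by (intro divide_strict_right_mono) auto
    also have "\<dots> \<le> 4 * \<theta>"
      using m(2) \<theta> by (simp add: field_simps)
    finally show ?thesis .
  qed
  ultimately show ?thesis by blast
qed

lemma metric_fejer_if_approximable:
  fixes \<sigma> :: "'g::group_add \<Rightarrow> 'g \<Rightarrow> complex"
  assumes "\<And>S \<epsilon>. finite S \<Longrightarrow> 0 < \<epsilon> \<Longrightarrow>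
    \<exists>\<psi>\<in>Kfun. \<psi> \<in> MA \<sigma> \<and> mult_norm \<sigma> \<psi> = 1 \<and> (\<forall>g\<in>S. cmod (\<psi> g - 1) < \<epsilon>)"
  shows "metric_fejer \<sigma>"
proof -
  define P where "P = (\<lambda>(S, \<epsilon>).
    {\<psi>\<in>Kfun. \<psi> \<in> MA \<sigma> \<and> mult_norm \<sigma> \<psi> = 1 \<and> (\<forall>g\<in>S. cmod (\<psi> g - 1) < \<epsilon>)})"
  define I where "I = {(S :: 'g set, \<epsilon> :: real). finite S \<and> 0 < \<epsilon>}"
  define F where "F = (INF i\<in>I. principal (P i))"
  have directed: "\<exists>k\<in>I. principal (P k) \<le> inf (principal (P i)) (principal (P j))"
    if "i \<in> I" "j \<in> I" for i j
  proof -
    obtain S1 \<epsilon>1 S2 \<epsilon>2 where "i = (S1, \<epsilon>1)" "j = (S2, \<epsilon>2)" by fastforce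
    with that show ?thesis
      by (intro bexI[of _ "(S1 \<union> S2, min \<epsilon>1 \<epsilon>2)"]) (auto simp: I_def P_def)
  qed
  have nonempty: "P i \<noteq> {}" if "i \<in> I" for i
    using that assms by (cases i) (fastforce simp: I_def P_def)
  have "F \<noteq> bot"
    using INF_filter_bot_base[of I "\<lambda>i. principal (P i)", OF directed] nonempty
    by (auto simp: F_def principal_eq_bot_iff)
  moreover have "\<forall>\<^sub>F \<psi> in F. \<psi> \<in> Kfun \<and> \<psi> \<in> MA \<sigma> \<and> mult_norm \<sigma> \<psi> = 1"
    unfolding F_def
    by (rule eventually_INF1[of "({}, 1)"]) (auto simp: I_def P_def eventually_principal)
  moreover have "((\<lambda>\<psi>. \<psi> g) \<longlongrightarrow> 1) F" for g
  proof (rule tendstoI)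
    fix \<epsilon> :: real assume "0 < \<epsilon>"
    then show "\<forall>\<^sub>F \<psi> in F. dist (\<psi> g) 1 < \<epsilon>"
      unfolding F_def
      by (intro eventually_INF1[of "({g}, \<epsilon>)"]) (auto simp: I_def P_def eventually_principal dist_norm)
  qed
  ultimately show ?thesis
    unfolding metric_fejer_def by blast
qed

theorem theorem5p14:
  fixes \<sigma> :: "'g::group_add \<Rightarrow> 'g \<Rightarrow> complex"
    and F :: "'i filter"
    and \<phi> :: "'i \<Rightarrow> 'g \<Rightarrow> complex"
    and \<kappa> :: "'i \<Rightarrow> 'g \<Rightarrow> real"
  assumes "normalized_2cocycle \<sigma>"
    and "F \<noteq> bot"
    and "\<forall>\<alpha>. \<phi> \<alpha> \<in> MA \<sigma> \<and> mult_norm \<sigma> (\<phi> \<alpha>) = 1"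
    and "\<forall>g. ((\<lambda>\<alpha>. \<phi> \<alpha> g) \<longlongrightarrow> 1) F"
    and "\<forall>\<alpha>. (\<forall>g. \<kappa> \<alpha> g \<ge> 1) \<and> kappa_decaying (\<kappa> \<alpha>)
            \<and> (\<lambda>g. \<phi> \<alpha> g * complex_of_real (\<kappa> \<alpha> g)) \<in> c0"
  shows "metric_fejer \<sigma>"
proof (rule metric_fejer_if_approximable)
  fix S :: "'g set" and \<epsilon> :: real
  assume S: "finite S" and \<epsilon>: "0 < \<epsilon>"
  define \<theta> where "\<theta> = min (\<epsilon> / 4) (1 / 2)"
  have \<theta>: "0 < \<theta>" "\<theta> \<le> 1/2" "4 * \<theta> \<le> \<epsilon>"
    using \<epsilon> by (auto simp: \<theta>_def)
  have "\<forall>\<^sub>F \<alpha> in F. \<forall>g\<in>S. cmod (\<phi> \<alpha> g - 1) < \<theta>"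
    using S assms(4) \<theta>(1) by (simp add: eventually_ball_finite tendsto_iff dist_norm)
  then obtain \<alpha> where "\<forall>g\<in>S. cmod (\<phi> \<alpha> g - 1) < \<theta>"
    using eventually_happens' assms(2) by blast
  then have "\<exists>\<psi>\<in>Kfun. \<psi> \<in> MA \<sigma> \<and> mult_norm \<sigma> \<psi> = 1 \<and> (\<forall>g\<in>S. cmod (\<psi> g - 1) < 4 * \<theta>)"
    using finitely_supported_norm_one_multiplier_near[OF assms(1) _ _ _ _ S \<theta>(1,2)] assms(3,5)
    by blast
  then show "\<exists>\<psi>\<in>Kfun. \<psi> \<in> MA \<sigma> \<and> mult_norm \<sigma> \<psi> = 1 \<and> (\<forall>g\<in>S. cmod (\<psi> g - 1) < \<epsilon>)"
    using \<theta>(3) by fastforce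
qed

end
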